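(* Let $\mu$ be a doubling measure on $\mathbb Z$ and set $a_j=\mu(j)$. If there exist integers $j_1<j_2<j_3$ with $a_{j_2}<\min\{a_{j_1},a_{j_3}\}$, then $C^0_\mu>3$.
   Context: $\mathbb Z$ is the infinite path graph with edges $\{j,j+1\}$ and distance $|i-j|$. A measure is a weight function $\mu:\mathbb Z\to(0,\infty)$, $\mu(A)=\sum_{v\in A}\mu(v)$; $B(x,r)=\{y:|x-y|\le r\}$; $\mu$ is doubling if $\sup\{\mu(B(x,2k+1))/\mu(B(x,k)):x\in\mathbb Z,k\ge0\}<\infty$; $C^0_\mu=\sup_{x\in\mathbb Z}\mu(B(x,1))/\mu(x)$. *)

theory Defs
  imports "HOL-Analysis.Analysis" "HOL-Library.Extended_Real"
begin

definition zball :: "int \<Rightarrow> nat \<Rightarrow> int set" where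
  "zball x r = {y. \<bar>x - y\<bar> \<le> int r}"

definition zmeasure :: "(int \<Rightarrow> real) \<Rightarrow> int set \<Rightarrow> real" where
  "zmeasure \<mu> A = (\<Sum>v\<in>A. \<mu> v)"

definition doubling :: "(int \<Rightarrow> real) \<Rightarrow> bool" where
  "doubling \<mu> \<longleftrightarrow> (\<forall>v. \<mu> v > 0) \<and>
     bdd_above {zmeasure \<mu> (zball x (2*k+1)) / zmeasure \<mu> (zball x k) | x k. True}"

definition C0 :: "(int \<Rightarrow> real) \<Rightarrow> ereal" where
  "C0 \<mu> = (SUP x. ereal (zmeasure \<mu> (zball x 1) / \<mu> x))"

end

theory Submission
  imports Defs
begin

text \<open>At the leftmost point \<open>m\<close> where \<open>\<mu>\<close> attains its minimum on \<open>[j1, j3]\<close>, which lies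
  strictly inside the interval, we have \<open>\<mu>(m) < \<mu>(m - 1)\<close> and \<open>\<mu>(m) \<le> \<mu>(m + 1)\<close>. So the unit
  ball around \<open>m\<close> has measure \<open>\<mu>(m - 1) + \<mu>(m) + \<mu>(m + 1) > 3 \<mu>(m)\<close>. Doubling is only
  needed for the positivity of \<open>\<mu>\<close>.\<close>

lemma exists_left_strict_local_min:
  fixes f :: "int \<Rightarrow> 'a::linorder"
  assumes "j1 < j2" "j2 < j3" "f j2 < min (f j1) (f j3)"
  obtains m where "j1 < m" "m < j3" "f m < f (m - 1)" "f m \<le> f (m + 1)"
proof -
  define S where "S = {j1..j3}"
  define v where "v = Min (f ` S)"
  define m where "m = Min {j \<in> S. f j = v}"
  have fin: "finite S" and j2S: "j2 \<in> S" using assms by (auto simp: S_def)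
  have v_le: "v \<le> f j" if "j \<in> S" for j using fin that by (simp add: v_def)
  have "v \<in> f ` S" using fin j2S unfolding v_def by (intro Min_in) auto
  then have "m \<in> {j \<in> S. f j = v}" using fin unfolding m_def by (intro Min_in) auto
  then have mS: "m \<in> S" and fm: "f m = v" by auto
  have m_leftmost: "m \<le> j" if "j \<in> S" "f j = v" for j
    using fin that unfolding m_def by (intro Min_le) auto
  have "f m \<le> f j2" using fm v_le j2S by simp
  with assms(3) have "m \<noteq> j1" "m \<noteq> j3" by auto
  with mS have inside: "j1 < m" "m < j3" by (auto simp: S_def)
  then have "m - 1 \<in> S" "m + 1 \<in> S" by (auto simp: S_def)
  moreover have "f (m - 1) \<noteq> v" using m_leftmost[of "m - 1"] \<open>m - 1 \<in> S\<close> by force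
  ultimately have "f m < f (m - 1)" "f m \<le> f (m + 1)"
    using v_le fm by (metis order_le_less)+
  with inside show thesis by (rule that)
qed

lemma zmeasure_zball_1: "zmeasure \<mu> (zball x 1) = \<mu> (x - 1) + \<mu> x + \<mu> (x + 1)"
proof -
  have "zball x 1 = {x - 1, x, x + 1}" by (auto simp: zball_def)
  then show ?thesis by (simp add: zmeasure_def)
qed

lemma ball_ratio_le_C0: "ereal (zmeasure \<mu> (zball x 1) / \<mu> x) \<le> C0 \<mu>"
  unfolding C0_def by (rule SUP_upper) simp

theorem lemma4p4:
  fixes \<mu> :: "int \<Rightarrow> real" and j1 j2 j3 :: int
  assumes "doubling \<mu>"
    and "j1 < j2" and "j2 < j3"
    and "\<mu> j2 < min (\<mu> j1) (\<mu> j3)"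
  shows "C0 \<mu> > 3"
proof -
  obtain m where "\<mu> m < \<mu> (m - 1)" "\<mu> m \<le> \<mu> (m + 1)"
    using exists_left_strict_local_min assms(2-4) by blast
  then have "3 * \<mu> m < zmeasure \<mu> (zball m 1)" unfolding zmeasure_zball_1 by linarith
  moreover have "\<mu> m > 0" using assms(1) by (simp add: doubling_def)
  ultimately have "3 < ereal (zmeasure \<mu> (zball m 1) / \<mu> m)"
    by (simp add: pos_less_divide_eq mult.commute)
  also have "\<dots> \<le> C0 \<mu>" by (rule ball_ratio_le_C0)
  finally show ?thesis .
qed

end
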